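(* Let $\alpha\in(0,\frac{\pi}{2}]$ and let $S$ be a finite set of line segments in the plane such that any two segments of $S$ that cross do so at angle $\alpha$. Then there exists a subset $S'\subset S$ of pairwise noncrossing segments with $|S'|\geq|S|/3$.
   Context: Segments in $S$ may overlap. Two segments cross if they intersect in a single point lying in the relative interior of both (alternatively, given a set $V$ of segment endpoints, if they intersect in a single point not in $V$). Two segments cross at angle $\alpha$ if the lines containing them meet at angle $\alpha$ (equivalently $\pi-\alpha$). *)

theory Defs
  imports "HOL-Analysis.Analysis"
begin

definition is_segment :: "complex set \<Rightarrow> bool" where
  "is_segment s \<longleftrightarrow> (\<exists>a b. a \<noteq> b \<and> s = closed_segment a b)"

definition crosses :: "complex set \<Rightarrow> complex set \<Rightarrow> bool" where
  "crosses s t \<longleftrightarrow> (\<exists>x. s \<inter> t = {x} \<and> x \<in> rel_interior s \<and> x \<in> rel_interior t)"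

definition line_angle :: "complex \<Rightarrow> complex \<Rightarrow> complex \<Rightarrow> complex \<Rightarrow> real" where
  "line_angle a b c d = arccos (\<bar>(b - a) \<bullet> (d - c)\<bar> / (norm (b - a) * norm (d - c)))"

definition segs_angle :: "complex set \<Rightarrow> complex set \<Rightarrow> real \<Rightarrow> bool" where
  "segs_angle s t \<alpha> \<longleftrightarrow> (\<exists>a b c d. a \<noteq> b \<and> c \<noteq> d \<and> s = closed_segment a b \<and>
      t = closed_segment c d \<and> (line_angle a b c d = \<alpha> \<or> line_angle a b c d = pi - \<alpha>))"

end

theory Submission
  imports Defs
begin

text \<open>Encode the direction of a segment by the square of its unit direction vector, which
  forgets the orientation and doubles angles. Segments crossing at angle \<alpha> then have
  directions differing by the rotation \<rho> = cis (2\<alpha>) \<noteq> 1, in one order or the other. In the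
  graph joining each direction v to v\<rho>, every vertex has at most the two neighbours v\<rho> and
  v/\<rho>, so it is greedily 3-colourable. Colouring every segment by its direction, the largest
  colour class is crossing-free and contains at least a third of the segments.\<close>

lemma three_colouring_if_two_neighbours:
  fixes W :: "'a set" and R :: "'a \<Rightarrow> 'a \<Rightarrow> bool"
  assumes "finite W"
    and "\<And>x. x \<in> W \<Longrightarrow> \<not> R x x"
    and "\<And>x y. x \<in> W \<Longrightarrow> y \<in> W \<Longrightarrow> R x y \<or> R y x \<Longrightarrow> y = f x \<or> y = g x"
  shows "\<exists>c::'a \<Rightarrow> nat. (\<forall>x. c x < 3) \<and> (\<forall>x\<in>W. \<forall>y\<in>W. R x y \<longrightarrow> c x \<noteq> c y)"
  using assms
proof (induction W rule: finite_induct)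
  case empty
  show ?case by (rule exI[of _ "\<lambda>_. 0"]) simp
next
  case (insert x F)
  then obtain c :: "'a \<Rightarrow> nat"
    where c: "\<forall>y. c y < 3" "\<forall>y\<in>F. \<forall>z\<in>F. R y z \<longrightarrow> c y \<noteq> c z"
    by blast
  have "\<exists>k::nat. k < 3 \<and> k \<noteq> m \<and> k \<noteq> n" for m n
    by presburger
  then obtain k :: nat where k: "k < 3" "k \<noteq> c (f x)" "k \<noteq> c (g x)"
    by blast
  have "(c(x := k)) y \<noteq> (c(x := k)) z"
    if "y \<in> insert x F" "z \<in> insert x F" "R y z" for y z
  proof -
    have "y = x \<longrightarrow> z \<noteq> x \<and> (z = f x \<or> z = g x)"
      using insert.prems that by blast
    moreover have "z = x \<longrightarrow> y = f x \<or> y = g x"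
      using insert.prems that by blast
    ultimately show ?thesis
      using c(2) k that by auto
  qed
  then show ?case
    using c(1) k(1) by (intro exI[of _ "c(x := k)"]) auto
qed

lemma three_colouring_rotation:
  fixes W :: "'a::field set"
  assumes "finite W" and "0 \<notin> W" and "\<rho> \<noteq> 0" and "\<rho> \<noteq> 1"
  shows "\<exists>c::'a \<Rightarrow> nat. (\<forall>x. c x < 3) \<and> (\<forall>v\<in>W. \<forall>w\<in>W. w = v * \<rho> \<longrightarrow> c v \<noteq> c w)"
proof (rule three_colouring_if_two_neighbours[where f = "\<lambda>v. v * \<rho>" and g = "\<lambda>v. v / \<rho>"])
  show "v \<noteq> v * \<rho>" if "v \<in> W" for v
    using that assms(2,4) by auto
  show "w = v * \<rho> \<or> w = v / \<rho>" if "w = v * \<rho> \<or> v = w * \<rho>" for v w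
    using that assms(3) by auto
qed (rule assms(1))

lemma exists_large_colour_class:
  fixes c :: "'a \<Rightarrow> nat"
  assumes "finite S" and "\<forall>s\<in>S. c s < k"
  shows "\<exists>i. card S \<le> k * card {s\<in>S. c s = i}"
proof (rule ccontr)
  assume small: "\<not> ?thesis"
  then obtain s where "s \<in> S" by fastforce
  then have "0 < k" using assms(2) by auto
  have "c ` S \<subseteq> {..<k}"
    using assms(2) by auto
  then have "card S = (\<Sum>i<k. card {s\<in>S. c s = i})"
    using sum.group[of S "{..<k}" c "\<lambda>_. 1::nat"] assms(1) by simp
  then have "k * card S = (\<Sum>i<k. k * card {s\<in>S. c s = i})"
    by (simp add: sum_distrib_left)
  also have "\<dots> < (\<Sum>i<k. card S)"
    using small \<open>0 < k\<close> by (intro sum_strict_mono) (auto simp: not_le)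
  finally show False by simp
qed

definition seg_dir :: "complex set \<Rightarrow> complex" where
  "seg_dir s = (SOME w. \<exists>a b. a \<noteq> b \<and> s = closed_segment a b \<and> w = sgn (b - a) ^ 2)"

lemma seg_dir_closed_segment:
  assumes "a \<noteq> b"
  shows "seg_dir (closed_segment a b) = sgn (b - a) ^ 2"
  unfolding seg_dir_def
proof (rule some_equality)
  fix w
  assume "\<exists>a' b'. a' \<noteq> b' \<and> closed_segment a b = closed_segment a' b' \<and> w = sgn (b' - a') ^ 2"
  then obtain a' b' where "{a, b} = {a', b'}" "w = sgn (b' - a') ^ 2"
    by auto
  moreover have "sgn (a - b) ^ 2 = sgn (b - a) ^ 2"
    by (metis minus_diff_eq power2_minus sgn_minus)
  ultimately show "w = sgn (b - a) ^ 2"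
    by (auto simp: doubleton_eq_iff)
qed (use assms in blast)

lemma norm_seg_dir:
  assumes "is_segment s"
  shows "norm (seg_dir s) = 1"
  using assms by (auto simp: is_segment_def seg_dir_closed_segment norm_power norm_sgn)

lemma line_angle_eq_arccos:
  assumes "a \<noteq> b" and "c \<noteq> d"
  shows "line_angle a b c d = arccos \<bar>sgn (b - a) \<bullet> sgn (d - c)\<bar>"
  unfolding line_angle_def sgn_div_norm inner_scaleR_left inner_scaleR_right
  by (simp add: abs_mult field_simps)

lemma cos_eq_imp_cis_eq:
  assumes "cos x = cos y"
  shows "cis x = cis y \<or> cis x = cis (- y)"
proof -
  have "(sin x)\<^sup>2 = (sin y)\<^sup>2"
    using assms by (simp add: sin_squared_eq)
  then have "sin x = sin y \<or> sin x = - sin y"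
    using power2_eq_iff by blast
  then show ?thesis
    using assms by (auto simp: complex_eq_iff)
qed

lemma unit_squares_rotated:
  fixes u v :: complex
  assumes "norm u = 1" and "norm v = 1" and "\<bar>u \<bullet> v\<bar> = cos \<alpha>"
  shows "u\<^sup>2 = v\<^sup>2 * cis (2 * \<alpha>) \<or> v\<^sup>2 = u\<^sup>2 * cis (2 * \<alpha>)"
proof -
  define z where "z = u * cnj v"
  have "v * cnj v = 1"
    using assms(2) by (simp add: complex_norm_square[symmetric])
  then have u_eq: "u = z * v"
    by (simp add: z_def mult.assoc mult.commute)
  have "norm z = 1"
    using assms(1,2) by (simp add: z_def norm_mult)
  then have "z \<noteq> 0"
    by auto
  then have z_eq: "z = cis (Arg z)"
    using \<open>norm z = 1\<close> by (simp add: cis_Arg sgn_div_norm)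
  have "Re z = u \<bullet> v"
    by (simp add: z_def inner_complex_def)
  then have "\<bar>cos (Arg z)\<bar> = cos \<alpha>"
    using assms(3) z_eq by (metis cis.sel(1))
  then have "cos (2 * Arg z) = cos (2 * \<alpha>)"
    by (metis cos_double_cos power2_abs)
  then have "cis (2 * Arg z) = cis (2 * \<alpha>) \<or> cis (2 * Arg z) = cis (- (2 * \<alpha>))"
    by (rule cos_eq_imp_cis_eq)
  moreover have "z\<^sup>2 = cis (2 * Arg z)"
    using arg_cong[OF z_eq, of "\<lambda>w. w\<^sup>2"] Complex.DeMoivre[of "Arg z" 2] by (simp only: of_nat_numeral)
  moreover have "u\<^sup>2 = v\<^sup>2 * z\<^sup>2"
    by (simp add: u_eq power_mult_distrib)
  ultimately consider "u\<^sup>2 = v\<^sup>2 * cis (2 * \<alpha>)" | "u\<^sup>2 = v\<^sup>2 * cis (- (2 * \<alpha>))"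
    by auto
  then show ?thesis
  proof cases
    case 2
    then have "u\<^sup>2 * cis (2 * \<alpha>) = v\<^sup>2 * (cis (- (2 * \<alpha>)) * cis (2 * \<alpha>))"
      by (simp add: mult.assoc)
    then show ?thesis
      by (simp add: cis_mult)
  qed simp
qed

lemma segs_angle_seg_dir:
  assumes "0 < \<alpha>" and "\<alpha> \<le> pi / 2" and "segs_angle s t \<alpha>"
  shows "seg_dir s = seg_dir t * cis (2 * \<alpha>) \<or> seg_dir t = seg_dir s * cis (2 * \<alpha>)"
proof -
  obtain a b c d where ab: "a \<noteq> b" and cd: "c \<noteq> d"
    and st: "s = closed_segment a b" "t = closed_segment c d"
    and angle: "line_angle a b c d = \<alpha> \<or> line_angle a b c d = pi - \<alpha>"
    using assms(3) by (auto simp: segs_angle_def)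
  define y where "y = \<bar>sgn (b - a) \<bullet> sgn (d - c)\<bar>"
  have "y \<le> 1"
    using Cauchy_Schwarz_ineq2[of "sgn (b - a)" "sgn (d - c)"] ab cd by (simp add: y_def norm_sgn)
  moreover have "0 \<le> y"
    by (simp add: y_def)
  moreover have "arccos y \<le> pi / 2"
    using \<open>0 \<le> y\<close> \<open>y \<le> 1\<close> by (rule arccos_le_pi2)
  ultimately have "arccos y = \<alpha>"
    using angle assms(1,2) line_angle_eq_arccos[OF ab cd] by (auto simp: y_def)
  then have "y = cos \<alpha>"
    using \<open>0 \<le> y\<close> \<open>y \<le> 1\<close> by (metis cos_arccos le_minus_one_simps(1) order_trans)
  then show ?thesis
    using unit_squares_rotated[of "sgn (b - a)" "sgn (d - c)" \<alpha>] ab cd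
    by (simp add: y_def st seg_dir_closed_segment norm_sgn)
qed

theorem corollary16:
  fixes S :: "complex set set" and \<alpha> :: real
  assumes "0 < \<alpha>" and "\<alpha> \<le> pi / 2"
    and "finite S" and "\<forall>s\<in>S. is_segment s"
    and "\<forall>s\<in>S. \<forall>t\<in>S. crosses s t \<longrightarrow> segs_angle s t \<alpha>"
  shows "\<exists>S'\<subseteq>S. (\<forall>s\<in>S'. \<forall>t\<in>S'. \<not> crosses s t) \<and> real (card S) \<le> 3 * real (card S')"
proof -
  define \<rho> where "\<rho> = cis (2 * \<alpha>)"
  have "\<rho> \<noteq> 0"
    by (simp add: \<rho>_def)
  moreover have "\<rho> \<noteq> 1"
    using cos_double_less_one[of \<alpha>] assms(1,2) pi_less_4 by (auto simp: \<rho>_def complex_eq_iff)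
  moreover have "0 \<notin> seg_dir ` S"
    using assms(4) norm_seg_dir by fastforce
  ultimately obtain col :: "complex \<Rightarrow> nat" where col: "\<forall>x. col x < 3"
    "\<forall>v\<in>seg_dir ` S. \<forall>w\<in>seg_dir ` S. w = v * \<rho> \<longrightarrow> col v \<noteq> col w"
    using three_colouring_rotation[OF finite_imageI[OF assms(3)]] by blast
  have crossing_colours: "col (seg_dir s) \<noteq> col (seg_dir t)" if "s \<in> S" "t \<in> S" "crosses s t" for s t
  proof -
    have "segs_angle s t \<alpha>"
      using assms(5) that by blast
    then consider "seg_dir s = seg_dir t * \<rho>" | "seg_dir t = seg_dir s * \<rho>"
      using segs_angle_seg_dir[OF assms(1,2)] unfolding \<rho>_def by blast
    then show ?thesis
      using col(2) that(1,2) by cases (metis imageI)+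
  qed
  have noncrossing: "\<forall>s\<in>{s\<in>S. col (seg_dir s) = i}. \<forall>t\<in>{s\<in>S. col (seg_dir s) = i}.
      \<not> crosses s t" for i
    using crossing_colours by blast
  obtain i where "card S \<le> 3 * card {s\<in>S. col (seg_dir s) = i}"
    using exists_large_colour_class[of S "col \<circ> seg_dir" 3] assms(3) col(1) by auto
  then show ?thesis
    using noncrossing by (intro exI[of _ "{s\<in>S. col (seg_dir s) = i}"]) auto
qed

end
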